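(* Let $h$ be a probability density on $\mathbb R$ satisfying (H1) $h$ is symmetric, positive and decreasing on $[0,\infty)$, and (H2) $\log(1/h(x))\le c_1(1+\log^{1+\kappa}(1+x))$ for all $x\ge0$, for some constants $c_1>0$, $\kappa\ge0$. For $\sigma>0$ let $\pi$ be the law of $\sigma\zeta$ where $\zeta$ has density $h$; let $\theta\sim\pi$ and $X\mid\theta\sim\mathcal N(\theta,1/n)$. Then there is a constant $C>0$ (depending only on $h$) such that for all $n\ge1$, $t\in\mathbb R$, $\theta_0\in\mathbb R$ and $\sigma>0$, $$E_{\theta_0}E^\pi\big[e^{t\sqrt n(\theta-X)}\,\big|\,X\big]\le C\,\sigma\sqrt n\, e^{t^2/2}\exp\Big\{c_1\log^{1+\kappa}\Big(1+\frac{|\theta_0|+1/\sqrt n}{\sigma}\Big)\Big\}.$$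
   Context: $E^\pi[\cdot\mid X]$ denotes expectation under the posterior distribution of $\theta$ given $X$ for prior $\pi$; $E_{\theta_0}$ denotes expectation over $X\sim\mathcal N(\theta_0,1/n)$. *)

theory Defs
  imports "HOL-Probability.Probability"
begin

text \<open>Prior pi = law of sigma*zeta, zeta with density h: prior density theta |-> h(theta/sigma)/sigma.
  Likelihood: X | theta ~ N(theta, 1/n), density x |-> normal_density theta (1/sqrt n) x.\<close>

definition prior_dens :: "(real \<Rightarrow> real) \<Rightarrow> real \<Rightarrow> real \<Rightarrow> real" where
  "prior_dens h \<sigma> \<theta> = h (\<theta> / \<sigma>) / \<sigma>"

definition lik :: "nat \<Rightarrow> real \<Rightarrow> real \<Rightarrow> real" where
  "lik n \<theta> x = normal_density \<theta> (1 / sqrt (real n)) x"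

definition post_exp :: "(real \<Rightarrow> real) \<Rightarrow> real \<Rightarrow> nat \<Rightarrow> (real \<Rightarrow> real) \<Rightarrow> real \<Rightarrow> real" where
  "post_exp h \<sigma> n g x =
     (\<integral>\<theta>. g \<theta> * lik n \<theta> x * prior_dens h \<sigma> \<theta> \<partial>lborel) /
     (\<integral>\<theta>. lik n \<theta> x * prior_dens h \<sigma> \<theta> \<partial>lborel)"

end

theory Submission
  imports Defs
begin

text \<open>
  Put s = 1/sqrt n. For \<theta> in the half of [\<theta>0 - s, \<theta>0 + s] lying on the side of x, the
  likelihood of x under \<theta> is at least e^(-1/2) times that under \<theta>0, and the prior density
  is at least h((|\<theta>0| + s)/\<sigma>)/\<sigma>. Hence the N(\<theta>0, s^2) density of x is at most
  K = e^(1/2) \<sigma> / (s h((|\<theta>0| + s)/\<sigma>)) times the marginal density of x, which is the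
  denominator of the posterior expectation. The left-hand side is therefore at most K times the
  integral over x of the numerator, and by Tonelli that integral is the prior average of the
  Gaussian moment generating function, e^(t^2/2). Finally (H2) bounds 1/h by
  e^c1 exp(c1 log^(1+\<kappa>)(1 + \<dots>)).
\<close>

lemma normal_density_exp_tilt:
  fixes a \<mu> s x :: real
  assumes "s > 0"
  shows "exp (a * (\<mu> - x)) * normal_density \<mu> s x
       = exp (a\<^sup>2 * s\<^sup>2 / 2) * normal_density (\<mu> - a * s\<^sup>2) s x"
proof -
  have "a * (\<mu> - x) + - (x - \<mu>)\<^sup>2 / (2 * s\<^sup>2)
      = a\<^sup>2 * s\<^sup>2 / 2 + - (x - (\<mu> - a * s\<^sup>2))\<^sup>2 / (2 * s\<^sup>2)"
    using assms by (simp add: field_simps power2_eq_square)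
  then show ?thesis
    unfolding normal_density_def by (simp add: exp_add[symmetric] algebra_simps)
qed

lemma nn_integral_normal_density:
  "s > 0 \<Longrightarrow> (\<integral>\<^sup>+x. ennreal (normal_density \<mu> s x) \<partial>lborel) = 1"
  by (subst nn_integral_eq_integral) auto

lemma nn_integral_exp_tilt_normal_density:
  fixes a \<mu> s :: real
  assumes "s > 0"
  shows "(\<integral>\<^sup>+x. ennreal (exp (a * (\<mu> - x)) * normal_density \<mu> s x) \<partial>lborel)
       = ennreal (exp (a\<^sup>2 * s\<^sup>2 / 2))"
  using assms
  by (simp add: normal_density_exp_tilt ennreal_mult nn_integral_cmult nn_integral_normal_density)

lemma normal_density_le:
  assumes "s > 0"
  shows "normal_density \<mu> s x \<le> 1 / s"
proof -
  have "1 \<le> sqrt (2 * pi)"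
    using pi_gt3 by simp
  then have "1 / sqrt (2 * pi * s\<^sup>2) \<le> 1 / s"
    using assms by (simp add: real_sqrt_mult field_simps)
  moreover have "exp (- (x - \<mu>)\<^sup>2 / (2 * s\<^sup>2)) \<le> 1"
    by simp
  ultimately have "1 / sqrt (2 * pi * s\<^sup>2) * exp (- (x - \<mu>)\<^sup>2 / (2 * s\<^sup>2)) \<le> 1 / s * 1"
    using assms by (intro mult_mono) auto
  then show ?thesis
    unfolding normal_density_def by simp
qed

lemma normal_density_shift_ge:
  fixes \<theta> \<mu> s x :: real
  assumes "s > 0" and towards: "0 \<le> (\<theta> - \<mu>) * (x - \<mu>)" and near: "\<bar>\<theta> - \<mu>\<bar> \<le> s"
  shows "exp (- 1/2) * normal_density \<mu> s x \<le> normal_density \<theta> s x"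
proof -
  have "(x - \<theta>)\<^sup>2 = (x - \<mu>)\<^sup>2 - 2 * ((\<theta> - \<mu>) * (x - \<mu>)) + (\<theta> - \<mu>)\<^sup>2"
    by (simp add: power2_eq_square algebra_simps)
  also have "\<dots> \<le> (x - \<mu>)\<^sup>2 + s\<^sup>2"
    using towards near abs_le_square_iff[of "\<theta> - \<mu>" s] assms(1) by simp
  finally have "(x - \<theta>)\<^sup>2 / (2 * s\<^sup>2) \<le> 1/2 + (x - \<mu>)\<^sup>2 / (2 * s\<^sup>2)"
    using assms(1) by (simp add: field_simps)
  then have "exp (- 1/2 + - (x - \<mu>)\<^sup>2 / (2 * s\<^sup>2)) \<le> exp (- (x - \<theta>)\<^sup>2 / (2 * s\<^sup>2))"
    by simp
  then show ?thesis
    unfolding normal_density_def exp_add by (simp add: mult.left_commute divide_right_mono)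
qed

lemma nn_integral_marginal_density_le:
  fixes p :: "real \<Rightarrow> real"
  assumes [measurable]: "p \<in> borel_measurable borel"
    and p_nonneg: "\<And>\<theta>. 0 \<le> p \<theta>"
    and p_prob: "(\<integral>\<^sup>+\<theta>. ennreal (p \<theta>) \<partial>lborel) = 1"
    and s: "s > 0"
  shows "(\<integral>\<^sup>+\<theta>. ennreal (normal_density \<theta> s x * p \<theta>) \<partial>lborel) \<le> ennreal (1 / s)"
proof -
  have "(\<integral>\<^sup>+\<theta>. ennreal (normal_density \<theta> s x * p \<theta>) \<partial>lborel)
      \<le> (\<integral>\<^sup>+\<theta>. ennreal (1 / s) * ennreal (p \<theta>) \<partial>lborel)"
    using mult_right_mono[OF normal_density_le[OF s] p_nonneg] s p_nonneg
    by (intro nn_integral_mono) (simp add: ennreal_mult[symmetric])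
  also have "\<dots> = ennreal (1 / s)"
    by (simp add: nn_integral_cmult p_prob)
  finally show ?thesis .
qed

lemma normal_density_le_marginal_density:
  fixes p :: "real \<Rightarrow> real"
  assumes p_meas[measurable]: "p \<in> borel_measurable borel"
    and p_nonneg: "\<And>\<theta>. 0 \<le> p \<theta>"
    and p_prob: "(\<integral>\<^sup>+\<theta>. ennreal (p \<theta>) \<partial>lborel) = 1"
    and p_ge: "\<And>\<theta>. \<theta> \<in> {\<mu> - s..\<mu> + s} \<Longrightarrow> m \<le> p \<theta>"
    and s: "s > 0" and m: "m > 0"
  shows "normal_density \<mu> s x
       \<le> exp (1/2) / (s * m) * (\<integral>\<theta>. normal_density \<theta> s x * p \<theta> \<partial>lborel)"
proof -
  define I where "I = (if \<mu> \<le> x then {\<mu>..\<mu> + s} else {\<mu> - s..\<mu>})"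
  define c where "c = exp (- 1/2) * normal_density \<mu> s x * m"
  have c_le: "c \<le> normal_density \<theta> s x * p \<theta>" if "\<theta> \<in> I" for \<theta>
  proof -
    have "0 \<le> (\<theta> - \<mu>) * (x - \<mu>)" "\<bar>\<theta> - \<mu>\<bar> \<le> s" "\<theta> \<in> {\<mu> - s..\<mu> + s}"
      using that s by (auto simp: I_def split: if_splits intro: mult_nonneg_nonneg mult_nonpos_nonpos)
    then show ?thesis
      unfolding c_def using normal_density_shift_ge[OF s] p_ge m
      by (intro mult_mono) auto
  qed
  have "ennreal (c * s) = (\<integral>\<^sup>+\<theta>. ennreal c * indicator I \<theta> \<partial>lborel)"
    using s m by (simp add: I_def c_def nn_integral_cmult_indicator ennreal_mult)
  also have "\<dots> \<le> (\<integral>\<^sup>+\<theta>. ennreal (normal_density \<theta> s x * p \<theta>) \<partial>lborel)"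
    using c_le by (intro nn_integral_mono) (auto simp: indicator_def intro: ennreal_leI)
  finally have lower: "ennreal (c * s) \<le> (\<integral>\<^sup>+\<theta>. ennreal (normal_density \<theta> s x * p \<theta>) \<partial>lborel)" .
  have "c * s = enn2real (ennreal (c * s))"
    using s m by (simp add: c_def)
  also have "\<dots> \<le> enn2real (\<integral>\<^sup>+\<theta>. ennreal (normal_density \<theta> s x * p \<theta>) \<partial>lborel)"
    using lower order.strict_trans1[OF nn_integral_marginal_density_le[OF p_meas p_nonneg p_prob s] ennreal_less_top]
    by (rule enn2real_mono)
  also have "\<dots> = (\<integral>\<theta>. normal_density \<theta> s x * p \<theta> \<partial>lborel)"
    using p_nonneg by (intro integral_eq_nn_integral[symmetric]) (unfold normal_density_def, auto)
  finally show ?thesis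
    using s m by (simp add: c_def exp_minus field_simps)
qed

lemma nn_integral_tilted_joint_density:
  fixes p :: "real \<Rightarrow> real"
  assumes [measurable]: "p \<in> borel_measurable borel"
    and p_nonneg: "\<And>\<theta>. 0 \<le> p \<theta>"
    and p_prob: "(\<integral>\<^sup>+\<theta>. ennreal (p \<theta>) \<partial>lborel) = 1"
    and s: "s > 0"
  shows "(\<integral>\<^sup>+x. \<integral>\<^sup>+\<theta>. ennreal (exp (a * (\<theta> - x)) * normal_density \<theta> s x * p \<theta>) \<partial>lborel \<partial>lborel)
       = ennreal (exp (a\<^sup>2 * s\<^sup>2 / 2))"
proof -
  have "(\<integral>\<^sup>+x. \<integral>\<^sup>+\<theta>. ennreal (exp (a * (\<theta> - x)) * normal_density \<theta> s x * p \<theta>) \<partial>lborel \<partial>lborel)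
      = (\<integral>\<^sup>+\<theta>. \<integral>\<^sup>+x. ennreal (exp (a * (\<theta> - x)) * normal_density \<theta> s x * p \<theta>) \<partial>lborel \<partial>lborel)"
    by (rule lborel_pair.Fubini'[symmetric]) (unfold normal_density_def, measurable)
  also have "\<dots> = (\<integral>\<^sup>+\<theta>. \<integral>\<^sup>+x. ennreal (exp (a * (\<theta> - x)) * normal_density \<theta> s x) * ennreal (p \<theta>) \<partial>lborel \<partial>lborel)"
    using p_nonneg by (simp add: ennreal_mult)
  also have "\<dots> = (\<integral>\<^sup>+\<theta>. ennreal (exp (a\<^sup>2 * s\<^sup>2 / 2)) * ennreal (p \<theta>) \<partial>lborel)"
    using s by (simp add: nn_integral_multc nn_integral_exp_tilt_normal_density)
  also have "\<dots> = ennreal (exp (a\<^sup>2 * s\<^sup>2 / 2))"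
    by (simp add: nn_integral_cmult p_prob)
  finally show ?thesis .
qed

lemma ennreal_integral_le_nn_integral:
  fixes f :: "'a \<Rightarrow> real"
  assumes "f \<in> borel_measurable M" and "AE x in M. 0 \<le> f x"
  shows "ennreal (\<integral>x. f x \<partial>M) \<le> (\<integral>\<^sup>+x. ennreal (f x) \<partial>M)"
  using assms by (simp add: integral_eq_nn_integral ennreal_enn2real_if)

lemma nn_integral_ratio_le:
  fixes f D N :: "'a \<Rightarrow> real"
  assumes f_le: "\<And>x. f x \<le> K * D x" and f_pos: "\<And>x. 0 < f x"
    and K: "K > 0" and N_nonneg: "\<And>x. 0 \<le> N x"
  shows "(\<integral>\<^sup>+x. ennreal (f x * (N x / D x)) \<partial>M) \<le> (\<integral>\<^sup>+x. ennreal K * ennreal (N x) \<partial>M)"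
proof (intro nn_integral_mono)
  fix x
  have "0 < D x"
    using less_le_trans[OF f_pos f_le] K by (simp add: zero_less_mult_iff)
  moreover have "f x * N x \<le> K * D x * N x"
    using f_le N_nonneg by (rule mult_right_mono)
  ultimately have "f x * (N x / D x) \<le> K * N x"
    by (simp add: field_simps)
  then show "ennreal (f x * (N x / D x)) \<le> ennreal K * ennreal (N x)"
    using K N_nonneg by (simp add: ennreal_mult[symmetric])
qed

lemma nn_integral_posterior_exp_tilt_le:
  fixes p :: "real \<Rightarrow> real"
  assumes p_meas[measurable]: "p \<in> borel_measurable borel"
    and p_nonneg: "\<And>\<theta>. 0 \<le> p \<theta>"
    and p_prob: "(\<integral>\<^sup>+\<theta>. ennreal (p \<theta>) \<partial>lborel) = 1"
    and p_ge: "\<And>\<theta>. \<theta> \<in> {\<mu> - s..\<mu> + s} \<Longrightarrow> m \<le> p \<theta>"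
    and s: "s > 0" and m: "m > 0"
  shows "(\<integral>\<^sup>+x. ennreal (normal_density \<mu> s x *
            ((\<integral>\<theta>. exp (a * (\<theta> - x)) * normal_density \<theta> s x * p \<theta> \<partial>lborel) /
             (\<integral>\<theta>. normal_density \<theta> s x * p \<theta> \<partial>lborel))) \<partial>lborel)
       \<le> ennreal (exp (1/2) / (s * m) * exp (a\<^sup>2 * s\<^sup>2 / 2))"
    (is "?lhs \<le> _")
proof -
  define G where "G x \<theta> = exp (a * (\<theta> - x)) * normal_density \<theta> s x * p \<theta>" for x \<theta>
  have G_meas[measurable]: "(\<lambda>(x, \<theta>). ennreal (G x \<theta>)) \<in> borel_measurable (lborel \<Otimes>\<^sub>M lborel)"
    "G x \<in> borel_measurable borel" for x
    unfolding G_def normal_density_def by measurable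
  have G_nonneg: "0 \<le> G x \<theta>" for x \<theta>
    using p_nonneg by (simp add: G_def)
  have "?lhs \<le> (\<integral>\<^sup>+x. ennreal (exp (1/2) / (s * m)) * ennreal (\<integral>\<theta>. G x \<theta> \<partial>lborel) \<partial>lborel)"
    unfolding G_def using s m p_ge G_nonneg
    by (intro nn_integral_ratio_le normal_density_le_marginal_density[OF p_meas p_nonneg p_prob]
        normal_density_pos integral_nonneg) (auto simp: G_def)
  also have "\<dots> \<le> (\<integral>\<^sup>+x. ennreal (exp (1/2) / (s * m)) * (\<integral>\<^sup>+\<theta>. ennreal (G x \<theta>) \<partial>lborel) \<partial>lborel)"
    using G_nonneg by (intro nn_integral_mono mult_left_mono ennreal_integral_le_nn_integral) auto
  also have "\<dots> = ennreal (exp (1/2) / (s * m)) * (\<integral>\<^sup>+x. \<integral>\<^sup>+\<theta>. ennreal (G x \<theta>) \<partial>lborel \<partial>lborel)"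
    by (rule nn_integral_cmult) measurable
  also have "\<dots> = ennreal (exp (1/2) / (s * m) * exp (a\<^sup>2 * s\<^sup>2 / 2))"
    using nn_integral_tilted_joint_density[OF p_meas p_nonneg p_prob s] s m
    by (simp add: G_def flip: ennreal_mult)
  finally show ?thesis .
qed

lemma borel_measurable_prior_dens[measurable]:
  assumes [measurable]: "h \<in> borel_measurable borel"
  shows "prior_dens h \<sigma> \<in> borel_measurable borel"
  unfolding prior_dens_def[abs_def] by measurable

lemma prior_dens_nonneg: "(\<And>x. 0 \<le> h x) \<Longrightarrow> 0 < \<sigma> \<Longrightarrow> 0 \<le> prior_dens h \<sigma> \<theta>"
  by (simp add: prior_dens_def)

lemma nn_integral_prior_dens:
  assumes [measurable]: "h \<in> borel_measurable borel"
    and h_nonneg: "\<And>x. 0 \<le> h x" and h_prob: "(\<integral>\<^sup>+x. ennreal (h x) \<partial>lborel) = 1"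
    and \<sigma>: "\<sigma> > 0"
  shows "(\<integral>\<^sup>+\<theta>. ennreal (prior_dens h \<sigma> \<theta>) \<partial>lborel) = 1"
proof -
  have "(\<integral>\<^sup>+\<theta>. ennreal (prior_dens h \<sigma> \<theta>) \<partial>lborel)
      = ennreal \<bar>\<sigma>\<bar> * (\<integral>\<^sup>+x. ennreal (prior_dens h \<sigma> (0 + \<sigma> * x)) \<partial>lborel)"
    using \<sigma> by (intro nn_integral_real_affine) auto
  also have "\<dots> = ennreal \<sigma> * (\<integral>\<^sup>+x. ennreal (1 / \<sigma>) * ennreal (h x) \<partial>lborel)"
    using \<sigma> h_nonneg by (simp add: prior_dens_def ennreal_mult[symmetric])
  also have "\<dots> = 1"
    using \<sigma> by (simp add: nn_integral_cmult h_prob ennreal_mult[symmetric])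
  finally show ?thesis .
qed

lemma prior_dens_ge:
  assumes symm: "\<And>x. h (- x) = h x"
    and decr: "\<And>x y. 0 \<le> x \<Longrightarrow> x \<le> y \<Longrightarrow> h y \<le> h x"
    and \<sigma>: "\<sigma> > 0" and \<theta>: "\<bar>\<theta>\<bar> \<le> b"
  shows "h (b / \<sigma>) / \<sigma> \<le> prior_dens h \<sigma> \<theta>"
proof -
  have "h (\<theta> / \<sigma>) = h \<bar>\<theta> / \<sigma>\<bar>"
    by (cases "\<theta> / \<sigma> \<ge> 0") (auto simp: symm abs_if)
  moreover have "h (b / \<sigma>) \<le> h \<bar>\<theta> / \<sigma>\<bar>"
    using \<theta> \<sigma> by (intro decr) (auto simp: divide_right_mono)
  ultimately show ?thesis
    unfolding prior_dens_def using \<sigma> by (simp add: divide_right_mono)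
qed

lemma nn_integral_post_exp_tilt_le:
  fixes h :: "real \<Rightarrow> real"
  assumes meas: "h \<in> borel_measurable borel"
    and dens: "has_bochner_integral lborel h 1"
    and symm: "\<And>x. h (- x) = h x"
    and pos: "\<And>x. h x > 0"
    and decr: "\<And>x y. 0 \<le> x \<Longrightarrow> x \<le> y \<Longrightarrow> h y \<le> h x"
    and n: "n \<ge> 1" and \<sigma>: "\<sigma> > 0"
  shows "(\<integral>\<^sup>+ x. ennreal (normal_density \<theta>0 (1 / sqrt (real n)) x *
            post_exp h \<sigma> n (\<lambda>\<theta>. exp (t * sqrt (real n) * (\<theta> - x))) x) \<partial>lborel)
       \<le> ennreal (exp (1/2) * \<sigma> * sqrt (real n) / h ((\<bar>\<theta>0\<bar> + 1 / sqrt (real n)) / \<sigma>) *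
            exp (t\<^sup>2 / 2))"
proof -
  define s where "s = 1 / sqrt (real n)"
  define y where "y = (\<bar>\<theta>0\<bar> + s) / \<sigma>"
  have s: "s > 0"
    using n by (simp add: s_def)
  have h_prob: "(\<integral>\<^sup>+x. ennreal (h x) \<partial>lborel) = 1"
    using dens pos by (simp add: has_bochner_integral_iff nn_integral_eq_integral less_imp_le)
  have prior_ge: "h y / \<sigma> \<le> prior_dens h \<sigma> \<theta>" if "\<theta> \<in> {\<theta>0 - s..\<theta>0 + s}" for \<theta>
    unfolding y_def using that by (intro prior_dens_ge[where h = h, OF symm decr \<sigma>]) auto
  have "(t * sqrt (real n))\<^sup>2 * s\<^sup>2 = t\<^sup>2"
    using n by (simp add: s_def power_mult_distrib power_divide)
  moreover have "(\<integral>\<^sup>+ x. ennreal (normal_density \<theta>0 s x *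
          post_exp h \<sigma> n (\<lambda>\<theta>. exp (t * sqrt (real n) * (\<theta> - x))) x) \<partial>lborel)
      \<le> ennreal (exp (1/2) / (s * (h y / \<sigma>)) * exp ((t * sqrt (real n))\<^sup>2 * s\<^sup>2 / 2))"
    unfolding post_exp_def lik_def s_def[symmetric]
    using meas pos \<sigma> s prior_ge
    by (intro nn_integral_posterior_exp_tilt_le nn_integral_prior_dens h_prob prior_dens_nonneg)
       (auto intro: less_imp_le)
  ultimately show ?thesis
    by (simp add: s_def y_def mult_ac)
qed

lemma inverse_le_exp_of_ln_inverse_le:
  fixes u c L :: real
  assumes "u > 0" and "ln (1 / u) \<le> c * (1 + L)"
  shows "1 / u \<le> exp c * exp (c * L)"
proof -
  have "1 / u = exp (ln (1 / u))"
    using assms(1) by simp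
  also have "\<dots> \<le> exp (c + c * L)"
    using assms(2) by (simp add: algebra_simps)
  finally show ?thesis
    by (simp add: exp_add)
qed

theorem mainTheorem4:
  fixes h :: "real \<Rightarrow> real" and c1 \<kappa> :: real
  assumes meas: "h \<in> borel_measurable borel"
    and dens: "has_bochner_integral lborel h 1"
    and symm: "\<And>x. h (- x) = h x"
    and pos: "\<And>x. h x > 0"
    and decr: "\<And>x y. 0 \<le> x \<Longrightarrow> x \<le> y \<Longrightarrow> h y \<le> h x"
    and c1: "c1 > 0" and \<kappa>: "\<kappa> \<ge> 0"
    and H2: "\<And>x. x \<ge> 0 \<Longrightarrow> ln (1 / h x) \<le> c1 * (1 + ln (1 + x) powr (1 + \<kappa>))"
  shows "\<exists>C>0. \<forall>(n::nat) t \<theta>0 \<sigma>. n \<ge> 1 \<longrightarrow> \<sigma> > 0 \<longrightarrow>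
     (\<integral>\<^sup>+ x. ennreal (normal_density \<theta>0 (1 / sqrt (real n)) x *
          post_exp h \<sigma> n (\<lambda>\<theta>. exp (t * sqrt (real n) * (\<theta> - x))) x) \<partial>lborel)
     \<le> ennreal (C * \<sigma> * sqrt (real n) * exp (t\<^sup>2 / 2) *
          exp (c1 * ln (1 + (\<bar>\<theta>0\<bar> + 1 / sqrt (real n)) / \<sigma>) powr (1 + \<kappa>)))"
proof (intro exI[of _ "exp (1/2 + c1)"] conjI allI impI)
  show "exp (1/2 + c1) > 0"
    by simp
  fix n :: nat and t \<theta>0 \<sigma> :: real
  assume n: "n \<ge> 1" and \<sigma>: "\<sigma> > 0"
  define y where "y = (\<bar>\<theta>0\<bar> + 1 / sqrt (real n)) / \<sigma>"
  have inv_h: "1 / h y \<le> exp c1 * exp (c1 * ln (1 + y) powr (1 + \<kappa>))"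
    using n \<sigma> by (intro inverse_le_exp_of_ln_inverse_le pos H2) (simp add: y_def)
  have "(\<integral>\<^sup>+ x. ennreal (normal_density \<theta>0 (1 / sqrt (real n)) x *
          post_exp h \<sigma> n (\<lambda>\<theta>. exp (t * sqrt (real n) * (\<theta> - x))) x) \<partial>lborel)
      \<le> ennreal (exp (1/2) * \<sigma> * sqrt (real n) * exp (t\<^sup>2 / 2) * (1 / h y))"
    using nn_integral_post_exp_tilt_le[OF meas dens symm pos decr n \<sigma>] by (simp add: y_def mult_ac)
  also have "\<dots> \<le> ennreal (exp (1/2) * \<sigma> * sqrt (real n) * exp (t\<^sup>2 / 2) *
      (exp c1 * exp (c1 * ln (1 + y) powr (1 + \<kappa>))))"
    using inv_h \<sigma> by (intro ennreal_leI mult_left_mono) auto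
  finally show "(\<integral>\<^sup>+ x. ennreal (normal_density \<theta>0 (1 / sqrt (real n)) x *
          post_exp h \<sigma> n (\<lambda>\<theta>. exp (t * sqrt (real n) * (\<theta> - x))) x) \<partial>lborel)
     \<le> ennreal (exp (1/2 + c1) * \<sigma> * sqrt (real n) * exp (t\<^sup>2 / 2) *
          exp (c1 * ln (1 + (\<bar>\<theta>0\<bar> + 1 / sqrt (real n)) / \<sigma>) powr (1 + \<kappa>)))"
    by (simp add: y_def exp_add mult_ac)
qed

end
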